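(* Let $\Lambda=\mathbb{Z}\oplus\mathbb{Z}\tau\subset\mathbb{C}$ with $\mathrm{Im}\,\tau>0$, $|\Lambda|$ its covolume, and $\psi$ a character of $\Lambda$. For $x>0$ let $Z(x,\Lambda,\psi)=\sum_{0\ne\mu\in\Lambda,\ |\mu|^2\le x}\psi(\mu)/|\mu|^2$. (1) If $\psi$ is trivial, there is a constant $\eta_\Lambda$ depending only on $\Lambda$ such that $Z(x,\Lambda,\psi)=\frac{\pi}{|\Lambda|}(\ln x+\eta_\Lambda)+O(x^{-1/2})$ as $x\to\infty$. (2) If $\psi$ is nontrivial, the limit $L(\Lambda,\psi)=\lim_{x\to\infty}Z(x,\Lambda,\psi)$ exists and $Z(x,\Lambda,\psi)=L(\Lambda,\psi)+O(x^{-1/2})$ as $x\to\infty$.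
   Context: A character of the lattice $\Lambda$ is a homomorphism $\psi:\Lambda\to\{w\in\mathbb{C}:|w|=1\}$ (a one-dimensional unitary representation). *)

theory Defs
  imports "HOL-Analysis.Analysis" "HOL-Library.Landau_Symbols"
begin

definition lattice :: "complex \<Rightarrow> complex set" where
  "lattice \<tau> = {of_int m + of_int n * \<tau> | m n. True}"

definition covolume :: "complex \<Rightarrow> real" where
  "covolume \<tau> = \<bar>Im \<tau>\<bar>"

definition is_character :: "complex \<Rightarrow> (complex \<Rightarrow> complex) \<Rightarrow> bool" where
  "is_character \<tau> \<psi> \<longleftrightarrow>
     (\<forall>\<mu>\<in>lattice \<tau>. norm (\<psi> \<mu>) = 1) \<and>
     (\<forall>\<mu>\<in>lattice \<tau>. \<forall>\<nu>\<in>lattice \<tau>. \<psi> (\<mu> + \<nu>) = \<psi> \<mu> * \<psi> \<nu>)"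

definition Zsum :: "real \<Rightarrow> complex \<Rightarrow> (complex \<Rightarrow> complex) \<Rightarrow> complex" where
  "Zsum x \<tau> \<psi> = (\<Sum>\<mu>\<in>{\<mu>\<in>lattice \<tau>. \<mu> \<noteq> 0 \<and> (cmod \<mu>)\<^sup>2 \<le> x}. \<psi> \<mu> / of_real ((cmod \<mu>)\<^sup>2))"

end

theory Submission
  imports Defs "HOL-Real_Asymp.Real_Asymp"
begin

(* By partial summation, Z(x) is controlled by the summatory function
   S(t) = sum of psi(mu) over the nonzero lattice points with |mu|^2 <= t: if
   S(t) = delta t + O(sqrt t), then Z(x) - delta ln x converges, and at rate O(x^(-1/2)).
   For trivial psi, S(t) + 1 is the number of lattice points in the disc of radius
   R = sqrt t; counting row by row, row n contains 2 sqrt(R^2 - (n Im tau)^2) + O(1) points,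
   and these row lengths are a monotone Riemann sum for the area of the disc, so
   S(t) = pi t / |Lambda| + O(sqrt t). For nontrivial psi, psi(m + n tau) = psi(tau)^n psi(1)^m
   with psi(1) or psi(tau) different from 1. The lattice points of a disc on a line parallel
   to 1 (or to tau) form an interval of integers, so S(t) is a sum of O(sqrt t) geometric sums,
   each bounded independently of t; hence S(t) = O(sqrt t). *)

section \<open>Partial summation\<close>

lemma has_integral_real_derivative:
  fixes f F :: "real \<Rightarrow> real"
  assumes "a \<le> b" and "\<And>t. a \<le> t \<Longrightarrow> t \<le> b \<Longrightarrow> (F has_real_derivative f t) (at t)"
  shows "(f has_integral (F b - F a)) {a..b}"
  using assms by (intro fundamental_theorem_of_calculus)
    (auto simp: has_real_derivative_iff_has_vector_derivative[symmetric]
      intro: has_field_derivative_at_within)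

lemma has_integral_inverse_square:
  fixes a b :: real
  assumes "0 < a" "a \<le> b"
  shows "((\<lambda>t. 1 / t\<^sup>2) has_integral (1/a - 1/b)) {a..b}"
proof -
  have "((\<lambda>t. 1 / t\<^sup>2) has_integral ((\<lambda>t. - 1 / t) b - (\<lambda>t. - 1 / t) a)) {a..b}"
    by (rule has_integral_real_derivative)
      (use assms in \<open>auto intro!: derivative_eq_intros simp: power2_eq_square\<close>)
  then show ?thesis by simp
qed

lemma has_integral_inverse:
  fixes a b :: real
  assumes "0 < a" "a \<le> b"
  shows "((\<lambda>t. 1 / t) has_integral (ln b - ln a)) {a..b}"
  by (rule has_integral_real_derivative) (use assms in \<open>auto intro!: derivative_eq_intros\<close>)

lemma has_integral_inverse_three_halves:
  fixes a b :: real
  assumes "0 < a" "a \<le> b"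
  shows "((\<lambda>t. 1 / (t * sqrt t)) has_integral (2 / sqrt a - 2 / sqrt b)) {a..b}"
proof -
  have "((\<lambda>t. 1 / (t * sqrt t)) has_integral ((\<lambda>t. - 2 / sqrt t) b - (\<lambda>t. - 2 / sqrt t) a)) {a..b}"
    by (rule has_integral_real_derivative)
      (use assms in \<open>auto intro!: derivative_eq_intros simp: field_simps\<close>)
  then show ?thesis by simp
qed

lemma has_integral_inverse_square_from:
  fixes a b s :: real
  assumes "0 < a" "a \<le> s" "s \<le> b"
  shows "((\<lambda>t. if s \<le> t then 1 / t\<^sup>2 else 0) has_integral (1/s - 1/b)) {a..b}"
proof -
  have "{s..} \<inter> {a..b} = {s..b}"
    using assms by auto
  then have "((\<lambda>t. 1 / t\<^sup>2) has_integral (1/s - 1/b)) ({s..} \<inter> {a..b})"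
    using assms by (simp add: has_integral_inverse_square)
  then have "((\<lambda>t. if t \<in> {s..} then 1 / t\<^sup>2 else 0) has_integral (1/s - 1/b)) {a..b}"
    by (subst has_integral_restrict_Int)
  then show ?thesis
    by simp
qed

lemma tendsto_at_top_with_rate:
  fixes W :: "real \<Rightarrow> 'a::banach" and g :: "real \<Rightarrow> real"
  assumes inc: "\<And>x y. x\<^sub>0 \<le> x \<Longrightarrow> x \<le> y \<Longrightarrow> norm (W y - W x) \<le> g x"
    and g: "(g \<longlongrightarrow> 0) at_top"
  obtains L where "(W \<longlongrightarrow> L) at_top" and "\<And>x. x\<^sub>0 \<le> x \<Longrightarrow> norm (W x - L) \<le> g x"
proof -
  have cauchy: "cauchy_filter (filtermap W at_top)"
    unfolding cauchy_filter_metric_filtermap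
  proof (intro allI impI)
    fix e :: real assume "0 < e"
    then obtain X where X: "\<And>x. X \<le> x \<Longrightarrow> g x < e"
      using order_tendstoD(2)[OF g] by (auto simp: eventually_at_top_linorder)
    have "dist (W x) (W y) < e" if "max x\<^sub>0 X \<le> x" "max x\<^sub>0 X \<le> y" for x y
    proof (cases "x \<le> y")
      case True
      then show ?thesis using inc[of x y] X[of x] that by (simp add: dist_norm norm_minus_commute)
    next
      case False
      then show ?thesis using inc[of y x] X[of y] that by (simp add: dist_norm)
    qed
    then show "\<exists>P. eventually P at_top \<and> (\<forall>x y. P x \<and> P y \<longrightarrow> dist (W x) (W y) < e)"
      using eventually_ge_at_top by blast
  qed
  moreover have "filtermap W at_top \<noteq> bot"
    by (simp add: filtermap_bot_iff)
  ultimately obtain L where L: "(W \<longlongrightarrow> L) at_top"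
    using complete_UNIV[unfolded complete_uniform] unfolding filterlim_def by force
  have "norm (W x - L) \<le> g x" if "x\<^sub>0 \<le> x" for x
  proof -
    have "((\<lambda>y. norm (W y - W x)) \<longlongrightarrow> norm (L - W x)) at_top"
      by (intro tendsto_intros L)
    moreover have "eventually (\<lambda>y. norm (W y - W x) \<le> g x) at_top"
      using eventually_ge_at_top[of x] by eventually_elim (use inc that in auto)
    ultimately have "norm (L - W x) \<le> g x"
      by (rule tendsto_upperbound) simp
    then show ?thesis by (simp add: norm_minus_commute)
  qed
  with L that show ?thesis by blast
qed

lemma bigo_inverse_sqrt:
  fixes f :: "real \<Rightarrow> 'a::real_normed_field"
  assumes "\<And>x. x\<^sub>0 \<le> x \<Longrightarrow> norm (f x) \<le> K / sqrt x"
  shows "f \<in> O[at_top](\<lambda>x. of_real (x powr (-1/2)))"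
proof (rule bigoI)
  show "eventually (\<lambda>x. norm (f x) \<le> K * norm (of_real (x powr (-1/2)) :: 'a)) at_top"
    using eventually_ge_at_top[of "max x\<^sub>0 1"]
  proof eventually_elim
    case (elim x)
    then have "x powr (-1/2) = 1 / sqrt x"
      by (simp add: powr_minus_divide powr_half_sqrt)
    then show ?case using assms[of x] elim by (simp add: norm_divide)
  qed
qed

definition sum_upto :: "('a \<Rightarrow> real) \<Rightarrow> 'a set \<Rightarrow> ('a \<Rightarrow> 'b::comm_monoid_add) \<Rightarrow> real \<Rightarrow> 'b" where
  "sum_upto r U w t = (\<Sum>\<mu>\<in>{\<mu>\<in>U. r \<mu> \<le> t}. w \<mu>)"

lemma sum_upto_diff:
  assumes "finite {\<mu>\<in>U. r \<mu> \<le> t}" "x \<le> t"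
  shows "sum_upto r U w t = sum_upto r U w x + (\<Sum>\<mu>\<in>{\<mu>\<in>U. x < r \<mu> \<and> r \<mu> \<le> t}. w \<mu>)"
proof -
  have "{\<mu>\<in>U. r \<mu> \<le> t} = {\<mu>\<in>U. r \<mu> \<le> x} \<union> {\<mu>\<in>U. x < r \<mu> \<and> r \<mu> \<le> t}"
    using assms(2) by auto
  moreover have "finite {\<mu>\<in>U. r \<mu> \<le> x}" "finite {\<mu>\<in>U. x < r \<mu> \<and> r \<mu> \<le> t}"
    using assms by (auto elim: finite_subset[rotated])
  ultimately show ?thesis
    unfolding sum_upto_def by (simp add: sum.union_disjoint disjoint_iff)
qed

lemma has_integral_sum_upto:
  fixes r :: "'a \<Rightarrow> real" and U :: "'a set" and w :: "'a \<Rightarrow> complex"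
  defines "S \<equiv> sum_upto r U w" and "Z \<equiv> sum_upto r U (\<lambda>\<mu>. w \<mu> / of_real (r \<mu>))"
  assumes fin: "finite {\<mu>\<in>U. r \<mu> \<le> y}" and x: "0 < x" and xy: "x \<le> y"
  shows "((\<lambda>t. S t / of_real (t\<^sup>2)) has_integral
      (Z y - S y / of_real y) - (Z x - S x / of_real x)) {x..y}"
proof -
  define D where "D = {\<mu>\<in>U. x < r \<mu> \<and> r \<mu> \<le> y}"
  have finD: "finite D"
    unfolding D_def using fin by (auto elim: finite_subset[rotated])
  have S_eq: "S t = S x + (\<Sum>\<mu>\<in>D. if r \<mu> \<le> t then w \<mu> else 0)" if "t \<in> {x..y}" for t
  proof -
    have "{\<mu>\<in>U. x < r \<mu> \<and> r \<mu> \<le> t} = {\<mu>\<in>D. r \<mu> \<le> t}"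
      using that by (auto simp: D_def)
    moreover have "finite {\<mu>\<in>U. r \<mu> \<le> t}"
      using fin that by (auto elim: finite_subset[rotated])
    ultimately have "S t = S x + (\<Sum>\<mu>\<in>{\<mu>\<in>D. r \<mu> \<le> t}. w \<mu>)"
      using that sum_upto_diff[of U r t x w] unfolding S_def by simp
    then show ?thesis
      by (simp add: sum.inter_filter[OF finD])
  qed
  have Z_eq: "Z y = Z x + (\<Sum>\<mu>\<in>D. w \<mu> / of_real (r \<mu>))"
    unfolding Z_def D_def using fin xy by (rule sum_upto_diff)
  have step: "((\<lambda>t. if r \<mu> \<le> t then 1 / t\<^sup>2 else 0) has_integral (1 / r \<mu> - 1 / y)) {x..y}"
    if "\<mu> \<in> D" for \<mu>
    using that x by (intro has_integral_inverse_square_from) (auto simp: D_def)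
  have "((\<lambda>t. S x * of_real (1 / t\<^sup>2) + (\<Sum>\<mu>\<in>D. w \<mu> * of_real (if r \<mu> \<le> t then 1 / t\<^sup>2 else 0)))
      has_integral S x * of_real (1 / x - 1 / y) + (\<Sum>\<mu>\<in>D. w \<mu> * of_real (1 / r \<mu> - 1 / y))) {x..y}"
    using x xy step
    by (intro has_integral_add has_integral_mult_right has_integral_sum finD has_integral_of_real
        has_integral_inverse_square) auto
  then show ?thesis
  proof (rule has_integral_eq[rotated, OF has_integral_eq_rhs])
    show "S x * of_real (1 / t\<^sup>2) + (\<Sum>\<mu>\<in>D. w \<mu> * of_real (if r \<mu> \<le> t then 1 / t\<^sup>2 else 0))
        = S t / of_real (t\<^sup>2)" if "t \<in> {x..y}" for t
    proof -
      have pointwise: "(if r \<mu> \<le> t then w \<mu> else 0) / of_real (t\<^sup>2)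
          = w \<mu> * of_real (if r \<mu> \<le> t then 1 / t\<^sup>2 else 0)" for \<mu>
        by simp
      show ?thesis
        unfolding S_eq[OF that] add_divide_distrib sum_divide_distrib pointwise by simp
    qed
    define A B where "A = sum w D" and "B = (\<Sum>\<mu>\<in>D. w \<mu> / of_real (r \<mu>))"
    have S_y: "S y = S x + A"
      using S_eq[of y] xy by (simp add: A_def D_def)
    have sum_eq: "(\<Sum>\<mu>\<in>D. w \<mu> * of_real (1 / r \<mu> - 1 / y)) = B - A / of_real y"
      unfolding A_def B_def
      by (simp add: right_diff_distrib sum_subtractf sum_distrib_right divide_inverse)
    show "(Z y - S y / of_real y) - (Z x - S x / of_real x) = S x * of_real (1 / x - 1 / y)
        + (\<Sum>\<mu>\<in>D. w \<mu> * of_real (1 / r \<mu> - 1 / y))"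
      unfolding sum_eq using S_y Z_eq x
      by (simp add: B_def[symmetric] field_simps add_divide_distrib)
  qed
qed

lemma norm_has_integral_over_square_le:
  fixes E :: "real \<Rightarrow> complex"
  assumes J: "((\<lambda>t. E t / of_real (t\<^sup>2)) has_integral J) {x..y}"
    and bound: "\<And>t. x \<le> t \<Longrightarrow> t \<le> y \<Longrightarrow> norm (E t) \<le> C * sqrt t"
    and x: "0 < x" and xy: "x \<le> y"
  shows "norm J \<le> 2 * C / sqrt x"
proof -
  have C: "0 \<le> C"
    using order_trans[OF norm_ge_zero bound[OF order_refl xy]] x by (simp add: zero_le_mult_iff)
  have majorant: "((\<lambda>t. C * (1 / (t * sqrt t))) has_integral C * (2 / sqrt x - 2 / sqrt y)) {x..y}"
    using x xy by (intro has_integral_mult_right has_integral_inverse_three_halves) auto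
  have "norm (E t / of_real (t\<^sup>2)) \<le> C * (1 / (t * sqrt t))" if "t \<in> {x..y}" for t
  proof -
    have "norm (E t / of_real (t\<^sup>2)) = norm (E t) / t\<^sup>2"
      by (simp add: norm_divide norm_power)
    also have "\<dots> \<le> C * sqrt t / t\<^sup>2"
      using bound that by (intro divide_right_mono) auto
    also have "\<dots> = C * (1 / (t * sqrt t))"
      using that x by (simp add: power2_eq_square field_simps)
    finally show ?thesis .
  qed
  then have "norm J \<le> C * (2 / sqrt x - 2 / sqrt y)"
    using integral_norm_bound_integral[OF has_integral_integrable[OF J]
        has_integral_integrable[OF majorant]] J majorant
    by (simp add: integral_unique)
  also have "\<dots> \<le> 2 * C / sqrt x"
    using C x xy by (simp add: algebra_simps)
  finally show ?thesis .
qed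

lemma sum_upto_log_increment_bound:
  fixes r :: "'a \<Rightarrow> real" and U :: "'a set" and w :: "'a \<Rightarrow> complex"
  defines "Z \<equiv> sum_upto r U (\<lambda>\<mu>. w \<mu> / of_real (r \<mu>))"
  assumes fin: "\<And>t. finite {\<mu>\<in>U. r \<mu> \<le> t}"
    and bound: "\<And>t. 1 \<le> t \<Longrightarrow> norm (sum_upto r U w t - \<delta> * of_real t) \<le> C * sqrt t"
    and x: "1 \<le> x" and xy: "x \<le> y"
  shows "norm ((Z y - \<delta> * of_real (ln y)) - (Z x - \<delta> * of_real (ln x))) \<le> 4 * C / sqrt x"
proof -
  define E where "E t = sum_upto r U w t - \<delta> * of_real t" for t
  define J where "J = ((Z y - \<delta> * of_real (ln y)) - E y / of_real y)
    - ((Z x - \<delta> * of_real (ln x)) - E x / of_real x)"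
  have C: "0 \<le> C"
    using order_trans[OF norm_ge_zero bound[of 1]] by simp
  have "((\<lambda>t. sum_upto r U w t / of_real (t\<^sup>2) - \<delta> * of_real (1 / t)) has_integral
      ((Z y - sum_upto r U w y / of_real y) - (Z x - sum_upto r U w x / of_real x))
      - \<delta> * of_real (ln y - ln x)) {x..y}"
    unfolding Z_def using x xy
    by (intro has_integral_diff has_integral_sum_upto fin has_integral_mult_right
        has_integral_of_real has_integral_inverse) auto
  then have J_integral: "((\<lambda>t. E t / of_real (t\<^sup>2)) has_integral J) {x..y}"
  proof (rule has_integral_eq[rotated, OF has_integral_eq_rhs])
    show "sum_upto r U w t / of_real (t\<^sup>2) - \<delta> * of_real (1 / t) = E t / of_real (t\<^sup>2)"
      if "t \<in> {x..y}" for t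
      using that x by (simp add: E_def diff_divide_distrib power2_eq_square)
    show "J = ((Z y - sum_upto r U w y / of_real y) - (Z x - sum_upto r U w x / of_real x))
        - \<delta> * of_real (ln y - ln x)"
      using x xy by (simp add: J_def E_def diff_divide_distrib algebra_simps)
  qed
  have "norm J \<le> 2 * C / sqrt x"
    by (rule norm_has_integral_over_square_le[OF J_integral]) (use x xy bound in \<open>auto simp: E_def\<close>)
  moreover have E_rate: "norm (E t / of_real t) \<le> C / sqrt x" if "x \<le> t" for t
  proof -
    have "norm (E t / of_real t) = norm (E t) / t"
      using that x by (simp add: norm_divide)
    also have "\<dots> \<le> C * sqrt t / t"
      using bound[of t] that x by (intro divide_right_mono) (simp_all add: E_def)
    also have "\<dots> = C / sqrt t"
      using that x sqrt_divide_self_eq[of t] by (simp add: divide_inverse)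
    also have "\<dots> \<le> C / sqrt x"
      using C that x by (simp add: divide_left_mono)
    finally show ?thesis .
  qed
  ultimately have "norm (J + E y / of_real y - E x / of_real x) \<le> 2 * C / sqrt x + C / sqrt x + C / sqrt x"
    using norm_triangle_ineq4[of "J + E y / of_real y" "E x / of_real x"]
      norm_triangle_ineq[of J "E y / of_real y"] E_rate[of x] E_rate[of y] xy by linarith
  then show ?thesis
    by (simp add: J_def algebra_simps)
qed

lemma sum_upto_asymptotics:
  fixes r :: "'a \<Rightarrow> real" and U :: "'a set" and w :: "'a \<Rightarrow> complex" and \<delta> :: complex
  defines "W \<equiv> \<lambda>x. sum_upto r U (\<lambda>\<mu>. w \<mu> / of_real (r \<mu>)) x - \<delta> * of_real (ln x)"
  assumes fin: "\<And>t. finite {\<mu>\<in>U. r \<mu> \<le> t}"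
    and bound: "\<And>t. 1 \<le> t \<Longrightarrow> norm (sum_upto r U w t - \<delta> * of_real t) \<le> C * sqrt t"
  obtains L where "(W \<longlongrightarrow> L) at_top" and "(\<lambda>x. W x - L) \<in> O[at_top](\<lambda>x. of_real (x powr (-1/2)))"
proof -
  have increment: "norm (W y - W x) \<le> 4 * C / sqrt x" if "1 \<le> x" "x \<le> y" for x y
    unfolding W_def using sum_upto_log_increment_bound[OF fin bound that] by simp
  have "((\<lambda>x. 4 * C / sqrt x) \<longlongrightarrow> 0) at_top"
    by real_asymp
  then obtain L where L: "(W \<longlongrightarrow> L) at_top"
    and rate: "\<And>x. 1 \<le> x \<Longrightarrow> norm (W x - L) \<le> 4 * C / sqrt x"
    using tendsto_at_top_with_rate[of 1 W "\<lambda>x. 4 * C / sqrt x"] increment by blast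
  have "(\<lambda>x. W x - L) \<in> O[at_top](\<lambda>x. of_real (x powr (-1/2)))"
    using rate by (rule bigo_inverse_sqrt)
  with L show ?thesis
    by (rule that)
qed

section \<open>Monotone sums and the area of a quarter disc\<close>

lemma mvt_antimono_bounds:
  fixes f F :: "real \<Rightarrow> real"
  assumes F_cont: "continuous_on {p..q} F"
    and F_deriv: "\<And>z. p < z \<Longrightarrow> z < q \<Longrightarrow> (F has_real_derivative f z) (at z)"
    and f_antimono: "\<And>u v. p \<le> u \<Longrightarrow> u \<le> v \<Longrightarrow> v \<le> q \<Longrightarrow> f v \<le> f u"
    and pq: "p \<le> q"
  shows "f q * (q - p) \<le> F q - F p" and "F q - F p \<le> f p * (q - p)"
proof -
  have "\<exists>z. p \<le> z \<and> z \<le> q \<and> F q - F p = (q - p) * f z"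
  proof (cases "p = q")
    case False
    then have "p < q" using pq by simp
    then obtain l z where z: "p < z" "z < q" and l: "(F has_real_derivative l) (at z)"
      and diff: "F q - F p = (q - p) * l"
      using MVT[OF _ F_cont] F_deriv real_differentiable_def by meson
    have "l = f z" using DERIV_unique[OF l F_deriv[OF z]] .
    with z diff show ?thesis by (intro exI[of _ z]) auto
  qed auto
  then obtain z where "p \<le> z" "z \<le> q" "F q - F p = (q - p) * f z" by blast
  moreover have "f q \<le> f z" "f z \<le> f p"
    using calculation pq f_antimono by auto
  ultimately show "f q * (q - p) \<le> F q - F p" "F q - F p \<le> f p * (q - p)"
    using pq by (simp_all add: mult_right_mono mult.commute)
qed

lemma antimono_sum_antiderivative_bounds:
  fixes f F :: "real \<Rightarrow> real" and K :: real
  assumes K: "0 \<le> K"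
    and F_cont: "continuous_on {0..K} F"
    and F_deriv: "\<And>z. 0 < z \<Longrightarrow> z < K \<Longrightarrow> (F has_real_derivative f z) (at z)"
    and f_antimono: "\<And>u v. 0 \<le> u \<Longrightarrow> u \<le> v \<Longrightarrow> v \<le> K \<Longrightarrow> f v \<le> f u"
    and f_nonneg: "\<And>u. 0 \<le> u \<Longrightarrow> u \<le> K \<Longrightarrow> 0 \<le> f u"
  shows "F K - F 0 \<le> (\<Sum>k\<le>nat \<lfloor>K\<rfloor>. f k)" and "(\<Sum>k\<le>nat \<lfloor>K\<rfloor>. f k) \<le> F K - F 0 + f 0"
proof -
  define N where "N = nat \<lfloor>K\<rfloor>"
  have N: "real N \<le> K" "K < real N + 1"
    unfolding N_def using K by linarith+
  have step: "f q * (q - p) \<le> F q - F p \<and> F q - F p \<le> f p * (q - p)"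
    if "0 \<le> p" "p \<le> q" "q \<le> K" for p q
    using mvt_antimono_bounds[of p q F f] that F_deriv f_antimono
      continuous_on_subset[OF F_cont, of "{p..q}"] by auto
  have telescope: "F N - F 0 = (\<Sum>k<N. F (Suc k) - F k)"
    using sum_lessThan_telescope[of "\<lambda>k. F (real k)" N] by simp
  have "f (Suc k) \<le> F (Suc k) - F k \<and> F (Suc k) - F k \<le> f k" if "k < N" for k
    using step[of k "Suc k"] that N by simp
  then have "(\<Sum>k<N. f (Suc k)) \<le> F N - F 0" "F N - F 0 \<le> (\<Sum>k<N. f k)"
    unfolding telescope by (auto intro!: sum_mono)
  moreover have "0 \<le> F K - F N" "F K - F N \<le> f N"
  proof -
    have "f K * (K - N) \<le> F K - F N" "F K - F N \<le> f N * (K - N)"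
      using step[of N K] N by auto
    moreover have "0 \<le> f K * (K - N)" "f N * (K - N) \<le> f N"
      using N f_nonneg[of K] f_nonneg[of N] K by (simp_all add: mult_left_le)
    ultimately show "0 \<le> F K - F N" "F K - F N \<le> f N"
      by linarith+
  qed
  moreover have "(\<Sum>k\<le>N. f k) = f 0 + (\<Sum>k<N. f (Suc k))"
    by (simp only: lessThan_Suc_atMost[symmetric] sum.lessThan_Suc_shift) simp
  moreover have "(\<Sum>k\<le>N. f k) = (\<Sum>k<N. f k) + f N"
    by (simp only: lessThan_Suc_atMost[symmetric] sum.lessThan_Suc)
  ultimately show "F K - F 0 \<le> (\<Sum>k\<le>nat \<lfloor>K\<rfloor>. f k)" "(\<Sum>k\<le>nat \<lfloor>K\<rfloor>. f k) \<le> F K - F 0 + f 0"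
    unfolding N_def[symmetric] by linarith+
qed

lemma has_real_derivative_quarter_disc_area:
  fixes b R u :: real
  assumes b: "0 < b" and u: "0 < u" "u < R / b"
  shows "((\<lambda>u. (u * sqrt (R\<^sup>2 - (b * u)\<^sup>2) + R\<^sup>2 / b * arcsin (b * u / R)) / 2)
      has_real_derivative sqrt (R\<^sup>2 - (b * u)\<^sup>2)) (at u)"
proof -
  have bu: "0 < b * u" "b * u < R"
    using b u by (auto simp: field_simps)
  then have "-1 < b * u / R" "b * u / R < 1" "0 < R\<^sup>2 - (b * u)\<^sup>2"
    by (simp_all add: field_simps power_strict_mono del: power_mult_distrib)
  moreover define w where "w = sqrt (R\<^sup>2 - (b * u)\<^sup>2)"
  ultimately have w: "0 < w" "w\<^sup>2 = R\<^sup>2 - (b * u)\<^sup>2"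
    by simp_all
  have sq: "sqrt (1 - (b * u / R)\<^sup>2) = w / R"
  proof -
    have "1 - (b * u / R)\<^sup>2 = (R\<^sup>2 - (b * u)\<^sup>2) / R\<^sup>2"
      using bu by (simp add: field_simps)
    then show ?thesis
      using bu by (simp add: real_sqrt_divide w_def)
  qed
  show ?thesis
    using b \<open>-1 < b * u / R\<close> \<open>b * u / R < 1\<close> \<open>0 < R\<^sup>2 - (b * u)\<^sup>2\<close> unfolding w_def[symmetric]
    by (auto intro!: derivative_eq_intros simp: sq w_def[symmetric])
      (use w in \<open>simp add: field_simps power2_eq_square\<close>)
qed

lemma sum_sqrt_quarter_disc_bounds:
  fixes b R :: real
  assumes b: "0 < b" and R: "0 < R"
  shows "pi * R\<^sup>2 / (4 * b) \<le> (\<Sum>k\<le>nat \<lfloor>R / b\<rfloor>. sqrt (R\<^sup>2 - (b * k)\<^sup>2))"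
    and "(\<Sum>k\<le>nat \<lfloor>R / b\<rfloor>. sqrt (R\<^sup>2 - (b * k)\<^sup>2)) \<le> pi * R\<^sup>2 / (4 * b) + R"
proof -
  define F where "F u = (u * sqrt (R\<^sup>2 - (b * u)\<^sup>2) + R\<^sup>2 / b * arcsin (b * u / R)) / 2" for u
  have in_disc: "(b * u)\<^sup>2 \<le> R\<^sup>2" if "0 \<le> u" "u \<le> R / b" for u
    using that b by (intro power_mono) (auto simp: field_simps)
  have "continuous_on {0..R / b} F"
    unfolding F_def using b R
    by (intro continuous_intros)
      (auto simp: field_simps intro: order_trans[OF _ mult_nonneg_nonneg])
  moreover have "F (R / b) - F 0 = pi * R\<^sup>2 / (4 * b)"
    using b R by (simp add: F_def)
  moreover have "sqrt (R\<^sup>2 - (b * v)\<^sup>2) \<le> sqrt (R\<^sup>2 - (b * u)\<^sup>2)" if "0 \<le> u" "u \<le> v" for u v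
    using that b by (simp add: power_mono)
  ultimately show "pi * R\<^sup>2 / (4 * b) \<le> (\<Sum>k\<le>nat \<lfloor>R / b\<rfloor>. sqrt (R\<^sup>2 - (b * k)\<^sup>2))"
    and "(\<Sum>k\<le>nat \<lfloor>R / b\<rfloor>. sqrt (R\<^sup>2 - (b * k)\<^sup>2)) \<le> pi * R\<^sup>2 / (4 * b) + R"
    using antimono_sum_antiderivative_bounds[of "R / b" F "\<lambda>u. sqrt (R\<^sup>2 - (b * u)\<^sup>2)"]
      has_real_derivative_quarter_disc_area[OF b] in_disc b R
    by (auto simp: F_def[abs_def] mult.commute)
qed

section \<open>Lattice points in a disc\<close>

lemma ints_in_interval_eq: "{m::int. \<bar>of_int m - c\<bar> \<le> w} = {\<lceil>c - w\<rceil>..\<lfloor>c + w\<rfloor>}"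
  by (auto simp: abs_le_iff ceiling_le_iff le_floor_iff)

lemma finite_ints_in_interval: "finite {m::int. \<bar>of_int m - c\<bar> \<le> (w::real)}"
  by (simp add: ints_in_interval_eq)

lemma card_ints_in_interval:
  fixes c w :: real
  assumes "0 \<le> w"
  shows "\<bar>real (card {m::int. \<bar>of_int m - c\<bar> \<le> w}) - 2 * w\<bar> \<le> 1"
proof -
  have bounds: "c + w - 1 < of_int \<lfloor>c + w\<rfloor>" "of_int \<lfloor>c + w\<rfloor> \<le> c + w"
    "c - w \<le> of_int \<lceil>c - w\<rceil>" "of_int \<lceil>c - w\<rceil> < c - w + 1"
    by linarith+
  then have "\<lfloor>c + w\<rfloor> - \<lceil>c - w\<rceil> + 1 \<ge> 0"
    using assms by linarith
  then have "real (card {\<lceil>c - w\<rceil>..\<lfloor>c + w\<rfloor>}) = of_int \<lfloor>c + w\<rfloor> - of_int \<lceil>c - w\<rceil> + 1"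
    by simp
  with bounds show ?thesis
    unfolding ints_in_interval_eq by linarith
qed

lemma card_le_ints_in_interval:
  fixes I :: "int set"
  assumes "0 \<le> w" "I \<subseteq> {m. \<bar>of_int m - c\<bar> \<le> w}"
  shows "real (card I) \<le> 2 * w + 1"
proof -
  have "card I \<le> card {m::int. \<bar>of_int m - c\<bar> \<le> w}"
    by (rule card_mono[OF finite_ints_in_interval assms(2)])
  then show ?thesis
    using card_ints_in_interval[OF assms(1), of c] by linarith
qed

lemma sum_symmetric_int_interval:
  fixes f :: "real \<Rightarrow> real"
  assumes "\<And>x. f (- x) = f x"
  shows "(\<Sum>n\<in>{- int N..int N}. f (of_int n)) = 2 * (\<Sum>k\<le>N. f (of_nat k)) - f 0"
proof (induction N)
  case (Suc N)
  have "{- int (Suc N)..int (Suc N)}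
      = insert (int (Suc N)) (insert (- int (Suc N)) {- int N..int N})"
    by auto
  then show ?case
    using Suc assms[of "of_nat (Suc N)"] by simp
qed simp

definition lattice_point :: "complex \<Rightarrow> int \<times> int \<Rightarrow> complex" where
  "lattice_point \<tau> p = of_int (snd p) + of_int (fst p) * \<tau>"

definition disc_points :: "complex \<Rightarrow> real \<Rightarrow> (int \<times> int) set" where
  "disc_points \<tau> R = {p. cmod (lattice_point \<tau> p) \<le> R}"

lemma Re_lattice_point [simp]: "Re (lattice_point \<tau> (n, m)) = of_int m + of_int n * Re \<tau>"
  and Im_lattice_point [simp]: "Im (lattice_point \<tau> (n, m)) = of_int n * Im \<tau>"
  by (simp_all add: lattice_point_def)

lemma lattice_eq_range_lattice_point: "lattice \<tau> = range (lattice_point \<tau>)"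
  by (auto simp: lattice_def lattice_point_def image_def)

lemma inj_lattice_point:
  assumes "Im \<tau> \<noteq> 0"
  shows "inj (lattice_point \<tau>)"
proof (rule injI)
  fix p q assume eq: "lattice_point \<tau> p = lattice_point \<tau> q"
  obtain n m n' m' where pq: "p = (n, m)" "q = (n', m')"
    by fastforce
  have "n = n'"
    using arg_cong[OF eq, of Im] assms by (simp add: pq)
  moreover have "m = m'"
    using arg_cong[OF eq, of Re] calculation by (simp add: pq)
  ultimately show "p = q"
    by (simp add: pq)
qed

lemma sum_squares_le_square_iff:
  fixes x y R :: real
  assumes "0 \<le> R"
  shows "x\<^sup>2 + y\<^sup>2 \<le> R\<^sup>2 \<longleftrightarrow> \<bar>y\<bar> \<le> R \<and> \<bar>x\<bar> \<le> sqrt (R\<^sup>2 - y\<^sup>2)"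
proof -
  have "x\<^sup>2 + y\<^sup>2 \<le> R\<^sup>2 \<longleftrightarrow> y\<^sup>2 \<le> R\<^sup>2 \<and> x\<^sup>2 \<le> R\<^sup>2 - y\<^sup>2"
    by (smt (verit) zero_le_power2)
  also have "\<dots> \<longleftrightarrow> \<bar>y\<bar> \<le> R \<and> \<bar>x\<bar> \<le> sqrt (R\<^sup>2 - y\<^sup>2)"
  proof -
    have "x\<^sup>2 \<le> R\<^sup>2 - y\<^sup>2 \<longleftrightarrow> \<bar>x\<bar> \<le> sqrt (R\<^sup>2 - y\<^sup>2)"
      by (metis real_sqrt_abs real_sqrt_le_iff)
    moreover have "y\<^sup>2 \<le> R\<^sup>2 \<longleftrightarrow> \<bar>y\<bar> \<le> R"
      using abs_le_square_iff[of y R] assms by simp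
    ultimately show ?thesis
      by blast
  qed
  finally show ?thesis .
qed

lemma mem_disc_points_iff:
  assumes "0 \<le> R"
  shows "(n, m) \<in> disc_points \<tau> R \<longleftrightarrow>
    \<bar>of_int n * Im \<tau>\<bar> \<le> R \<and> \<bar>of_int m + of_int n * Re \<tau>\<bar> \<le> sqrt (R\<^sup>2 - (of_int n * Im \<tau>)\<^sup>2)"
proof -
  have "(n, m) \<in> disc_points \<tau> R \<longleftrightarrow> (cmod (lattice_point \<tau> (n, m)))\<^sup>2 \<le> R\<^sup>2"
    using assms by (simp add: disc_points_def abs_le_square_iff[symmetric])
  also have "\<dots> \<longleftrightarrow> (of_int m + of_int n * Re \<tau>)\<^sup>2 + (of_int n * Im \<tau>)\<^sup>2 \<le> R\<^sup>2"
    by (simp add: cmod_power2)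
  finally show ?thesis
    using sum_squares_le_square_iff[OF assms] by simp
qed

lemma disc_points_coordinate_bounds:
  assumes "(n, m) \<in> disc_points \<tau> R" "0 < Im \<tau>"
  shows "\<bar>of_int n\<bar> \<le> R / Im \<tau>" and "\<bar>of_int m\<bar> \<le> R + R * \<bar>Re \<tau>\<bar> / Im \<tau>"
proof -
  have Im: "\<bar>of_int n\<bar> * Im \<tau> \<le> R" and Re: "\<bar>of_int m + of_int n * Re \<tau>\<bar> \<le> R"
    using abs_Im_le_cmod[of "lattice_point \<tau> (n, m)"] abs_Re_le_cmod[of "lattice_point \<tau> (n, m)"]
      assms by (auto simp: disc_points_def abs_mult)
  then show n: "\<bar>of_int n\<bar> \<le> R / Im \<tau>"
    using assms(2) by (simp add: field_simps)
  have "\<bar>of_int n * Re \<tau>\<bar> \<le> R * \<bar>Re \<tau>\<bar> / Im \<tau>"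
    using mult_right_mono[OF n, of "\<bar>Re \<tau>\<bar>"] by (simp add: abs_mult)
  with Re show "\<bar>of_int m\<bar> \<le> R + R * \<bar>Re \<tau>\<bar> / Im \<tau>"
    by linarith
qed

lemma finite_disc_points:
  assumes "0 < Im \<tau>"
  shows "finite (disc_points \<tau> R)"
proof (rule finite_subset)
  show "disc_points \<tau> R \<subseteq>
      {n. \<bar>of_int n - 0\<bar> \<le> R / Im \<tau>} \<times> {m. \<bar>of_int m - 0\<bar> \<le> R + R * \<bar>Re \<tau>\<bar> / Im \<tau>}"
    using disc_points_coordinate_bounds[OF _ assms] by auto
qed (intro finite_cartesian_product finite_ints_in_interval)

lemma int_mem_floor_interval_iff:
  fixes b R :: real
  assumes "0 < b"
  shows "n \<in> {- \<lfloor>R / b\<rfloor>..\<lfloor>R / b\<rfloor>} \<longleftrightarrow> \<bar>of_int n * b\<bar> \<le> R"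
proof -
  have "n \<in> {- \<lfloor>R / b\<rfloor>..\<lfloor>R / b\<rfloor>} \<longleftrightarrow> \<bar>n\<bar> \<le> \<lfloor>R / b\<rfloor>"
    by auto
  also have "\<dots> \<longleftrightarrow> \<bar>of_int n\<bar> \<le> R / b"
    by (simp add: le_floor_iff)
  also have "\<dots> \<longleftrightarrow> \<bar>of_int n * b\<bar> \<le> R"
    using assms by (simp add: abs_mult field_simps)
  finally show ?thesis .
qed

lemma disc_points_eq_Sigma:
  assumes "0 < Im \<tau>" "0 \<le> R"
  shows "disc_points \<tau> R = (SIGMA n:{- \<lfloor>R / Im \<tau>\<rfloor>..\<lfloor>R / Im \<tau>\<rfloor>}.
    {m. \<bar>of_int m + of_int n * Re \<tau>\<bar> \<le> sqrt (R\<^sup>2 - (of_int n * Im \<tau>)\<^sup>2)})"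
  using assms
  by (auto simp: set_eq_iff mem_disc_points_iff int_mem_floor_interval_iff[symmetric]
      simp del: atLeastAtMost_iff)

lemma card_disc_points:
  assumes b: "0 < Im \<tau>" and R: "0 < R"
  shows "\<bar>real (card (disc_points \<tau> R)) - pi * R\<^sup>2 / Im \<tau>\<bar> \<le> 2 * R + 2 * R / Im \<tau> + 1"
proof -
  define N where "N = nat \<lfloor>R / Im \<tau>\<rfloor>"
  define w where "w x = sqrt (R\<^sup>2 - (x * Im \<tau>)\<^sup>2)" for x
  define row where "row n = {m. \<bar>of_int m - (- of_int n * Re \<tau>)\<bar> \<le> w (of_int n)}" for n :: int
  have N: "int N = \<lfloor>R / Im \<tau>\<rfloor>"
    unfolding N_def using b R by simp
  have row_finite: "finite (row n)" for n
    unfolding row_def by (rule finite_ints_in_interval)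
  have "disc_points \<tau> R = Sigma {- int N..int N} row"
    using disc_points_eq_Sigma[OF b] R by (simp add: N row_def[abs_def] w_def)
  then have "real (card (disc_points \<tau> R)) = (\<Sum>n\<in>{- int N..int N}. real (card (row n)))"
    by (simp add: row_finite)
  moreover have "\<bar>(\<Sum>n\<in>{- int N..int N}. real (card (row n)))
      - (\<Sum>n\<in>{- int N..int N}. 2 * w (of_int n))\<bar> \<le> 2 * real N + 1"
  proof -
    have "\<bar>real (card (row n)) - 2 * w (of_int n)\<bar> \<le> 1" if "n \<in> {- int N..int N}" for n
    proof -
      have "n \<in> {- \<lfloor>R / Im \<tau>\<rfloor>..\<lfloor>R / Im \<tau>\<rfloor>}"
        using that by (simp add: N)
      then have "\<bar>of_int n * Im \<tau>\<bar> \<le> R"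
        using int_mem_floor_interval_iff[OF b] by blast
      then have "(of_int n * Im \<tau>)\<^sup>2 \<le> R\<^sup>2"
        using R by (simp add: abs_le_square_iff[symmetric])
      then show ?thesis
        unfolding row_def by (intro card_ints_in_interval) (simp add: w_def)
    qed
    then have "(\<Sum>n\<in>{- int N..int N}. \<bar>real (card (row n)) - 2 * w (of_int n)\<bar>)
        \<le> (\<Sum>n\<in>{- int N..int N}. 1)"
      by (rule sum_mono)
    then show ?thesis
      by (simp add: sum_subtractf[symmetric] order_trans[OF sum_abs])
  qed
  moreover have "(\<Sum>n\<in>{- int N..int N}. 2 * w (of_int n)) = 4 * (\<Sum>k\<le>N. w (of_nat k)) - 2 * R"
    using sum_symmetric_int_interval[of w N] R by (simp add: w_def sum_distrib_left[symmetric])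
  moreover have "pi * R\<^sup>2 / (4 * Im \<tau>) \<le> (\<Sum>k\<le>N. w (of_nat k))"
    "(\<Sum>k\<le>N. w (of_nat k)) \<le> pi * R\<^sup>2 / (4 * Im \<tau>) + R"
    using sum_sqrt_quarter_disc_bounds[OF b R] by (simp_all add: N_def w_def mult.commute)
  moreover have "real N \<le> R / Im \<tau>"
    unfolding N_def using b R by simp
  then have "2 * real N \<le> 2 * R / Im \<tau>"
    by simp
  ultimately show ?thesis
    by (simp add: abs_le_iff)
qed

lemma card_disc_points_sqrt:
  assumes b: "0 < Im \<tau>" and t: "1 \<le> t"
  shows "\<bar>real (card (disc_points \<tau> (sqrt t))) - 1 - pi * (sqrt t)\<^sup>2 / Im \<tau>\<bar>
    \<le> (4 + 2 / Im \<tau>) * sqrt t"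
proof -
  have "\<bar>real (card (disc_points \<tau> (sqrt t))) - 1 - pi * (sqrt t)\<^sup>2 / Im \<tau>\<bar>
      \<le> 2 * sqrt t + 2 * sqrt t / Im \<tau> + 2"
    using card_disc_points[OF b, of "sqrt t"] t by simp
  also have "\<dots> \<le> (4 + 2 / Im \<tau>) * sqrt t"
    using t by (simp add: algebra_simps)
  finally show ?thesis .
qed

section \<open>Character sums over a disc\<close>

lemma geometric_sum_powi:
  fixes \<gamma> :: "'a::field"
  assumes "\<gamma> \<noteq> 0" "p - 1 \<le> q"
  shows "(1 - \<gamma>) * (\<Sum>j\<in>{p..q}. \<gamma> powi j) = \<gamma> powi p - \<gamma> powi (q + 1)"
  using assms(2)
proof (induction q rule: int_ge_induct)
  case (step q)
  have "{p..q + 1} = insert (q + 1) {p..q}"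
    using step.hyps by auto
  then have "(1 - \<gamma>) * (\<Sum>j\<in>{p..q + 1}. \<gamma> powi j)
      = (1 - \<gamma>) * \<gamma> powi (q + 1) + (\<gamma> powi p - \<gamma> powi (q + 1))"
    using step.IH by (simp add: distrib_left)
  also have "\<dots> = \<gamma> powi p - \<gamma> powi (q + 1 + 1)"
    using assms(1) by (simp add: power_int_add power2_eq_square algebra_simps)
  finally show ?case .
qed simp

lemma norm_geometric_sum_powi_le:
  fixes \<gamma> :: complex
  assumes "norm \<gamma> = 1" "\<gamma> \<noteq> 1"
  shows "norm (\<Sum>j\<in>{p..q}. \<gamma> powi j) \<le> 2 / norm (1 - \<gamma>)"
proof (cases "p \<le> q")
  case True
  have "\<gamma> \<noteq> 0"
    using assms(1) by auto
  with True have "(1 - \<gamma>) * (\<Sum>j\<in>{p..q}. \<gamma> powi j) = \<gamma> powi p - \<gamma> powi (q + 1)"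
    using geometric_sum_powi[of \<gamma> p q] by simp
  then have "norm (\<Sum>j\<in>{p..q}. \<gamma> powi j) * norm (1 - \<gamma>) = norm (\<gamma> powi p - \<gamma> powi (q + 1))"
    by (metis norm_mult mult.commute)
  also have "\<dots> \<le> 2"
    using norm_triangle_ineq4[of "\<gamma> powi p" "\<gamma> powi (q + 1)"] assms by (simp add: norm_power_int)
  finally show ?thesis
    using assms(2) by (simp add: pos_le_divide_eq)
qed simp

lemma finite_int_convex_eq_atLeastAtMost:
  fixes I :: "int set"
  assumes "finite I" "I \<noteq> {}"
    and convex: "\<And>i j l. i \<in> I \<Longrightarrow> l \<in> I \<Longrightarrow> i \<le> j \<Longrightarrow> j \<le> l \<Longrightarrow> j \<in> I"
  shows "I = {Min I..Max I}"
proof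
  show "I \<subseteq> {Min I..Max I}"
    using assms(1) by auto
  have "Min I \<in> I" "Max I \<in> I"
    using assms(1,2) by simp_all
  then show "{Min I..Max I} \<subseteq> I"
    using convex[of "Min I" "Max I"] by auto
qed

lemma norm_sum_geometric_rows_le:
  fixes S :: "(int \<times> int) set" and c :: "int \<Rightarrow> complex" and \<gamma> :: complex
  assumes S: "finite S" and \<gamma>: "norm \<gamma> = 1" "\<gamma> \<noteq> 1" and c: "\<And>k. norm (c k) \<le> 1"
    and rows: "\<And>k i j l. (k, i) \<in> S \<Longrightarrow> (k, l) \<in> S \<Longrightarrow> i \<le> j \<Longrightarrow> j \<le> l \<Longrightarrow> (k, j) \<in> S"
  shows "norm (\<Sum>(k, j)\<in>S. c k * \<gamma> powi j) \<le> card (fst ` S) * (2 / norm (1 - \<gamma>))"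
proof -
  define row where "row k = {j. (k, j) \<in> S}" for k
  have row_finite: "finite (row k)" for k
  proof (rule finite_subset)
    show "row k \<subseteq> snd ` S"
      unfolding row_def by (auto intro: rev_image_eqI)
  qed (use S in simp)
  have "Sigma (fst ` S) row = S"
    unfolding row_def by (auto intro: rev_image_eqI)
  moreover have "(\<Sum>k\<in>fst ` S. \<Sum>j\<in>row k. c k * \<gamma> powi j)
      = (\<Sum>(k, j)\<in>Sigma (fst ` S) row. c k * \<gamma> powi j)"
    by (rule sum.Sigma) (use S row_finite in auto)
  ultimately have "(\<Sum>(k, j)\<in>S. c k * \<gamma> powi j) = (\<Sum>k\<in>fst ` S. c k * (\<Sum>j\<in>row k. \<gamma> powi j))"
    by (simp add: sum_distrib_left)
  also have "norm \<dots> \<le> (\<Sum>k\<in>fst ` S. 2 / norm (1 - \<gamma>))"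
  proof (rule sum_norm_le)
    fix k assume "k \<in> fst ` S"
    then obtain j where "(k, j) \<in> S"
      by auto
    then have "row k \<noteq> {}"
      by (auto simp: row_def)
    with row_finite have "row k = {Min (row k)..Max (row k)}"
      by (rule finite_int_convex_eq_atLeastAtMost) (auto simp: row_def intro: rows)
    then obtain p q where "row k = {p..q}"
      by blast
    then have "norm (\<Sum>j\<in>row k. \<gamma> powi j) \<le> 2 / norm (1 - \<gamma>)"
      using norm_geometric_sum_powi_le[OF \<gamma>] by simp
    then show "norm (c k * (\<Sum>j\<in>row k. \<gamma> powi j)) \<le> 2 / norm (1 - \<gamma>)"
      unfolding norm_mult using c[of k] by (meson order_trans mult_left_le_one_le norm_ge_zero)
  qed
  finally show ?thesis
    by simp
qed

lemma int_points_on_segment: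
  fixes C :: "'a::real_vector set"
  assumes "convex C" "a + of_int i *\<^sub>R v \<in> C" "a + of_int l *\<^sub>R v \<in> C" "i \<le> j" "j \<le> l"
  shows "a + of_int j *\<^sub>R v \<in> C"
proof (cases "i = l")
  case False
  define s where "s = (of_int l - of_int j) / (of_int l - of_int i :: real)"
  define u where "u = (of_int j - of_int i) / (of_int l - of_int i :: real)"
  have d: "of_int l - of_int i \<noteq> (0::real)"
    using False by simp
  have "s + u = 1" "0 \<le> s" "0 \<le> u"
    using d assms(4,5) by (simp_all add: s_def u_def add_divide_distrib[symmetric])
  moreover have "s * of_int i + u * of_int l
      = of_int j * (of_int l - of_int i) / (of_int l - of_int i)"
    by (simp add: s_def u_def add_divide_distrib[symmetric] algebra_simps)
  then have "s * of_int i + u * of_int l = of_int j"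
    using d by simp
  moreover have "s *\<^sub>R (a + of_int i *\<^sub>R v) + u *\<^sub>R (a + of_int l *\<^sub>R v)
      = (s + u) *\<^sub>R a + (s * of_int i + u * of_int l) *\<^sub>R v"
    by (simp add: algebra_simps)
  ultimately show ?thesis
    using convexD[OF assms(1-3), of s u] by simp
qed (use assms in simp)

lemma additive_to_multiplicative_powi:
  fixes h :: "int \<Rightarrow> 'a::field"
  assumes add: "\<And>i j. h (i + j) = h i * h j" and h1: "h 1 \<noteq> 0"
  shows "h n = h 1 powi n"
proof (induction n rule: int_induct[where k = 0])
  case base
  show ?case
    using add[of 0 1] h1 by simp
next
  case (step1 i)
  then show ?case
    using add[of i 1] h1 by (simp add: power_int_add)
next
  case (step2 i)
  then show ?case
    using add[of "i - 1" 1] h1 by (simp add: power_int_diff field_simps)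
qed

lemma character_lattice_point:
  assumes "is_character \<tau> \<psi>"
  shows "\<psi> (lattice_point \<tau> (n, m)) = \<psi> \<tau> powi n * \<psi> 1 powi m"
proof -
  define \<theta> where "\<theta> p = \<psi> (lattice_point \<tau> p)" for p
  have in_lattice: "lattice_point \<tau> p \<in> lattice \<tau>" for p
    by (simp add: lattice_eq_range_lattice_point)
  have hom: "\<psi> (\<mu> + \<nu>) = \<psi> \<mu> * \<psi> \<nu>" if "\<mu> \<in> lattice \<tau>" "\<nu> \<in> lattice \<tau>" for \<mu> \<nu>
    using assms that unfolding is_character_def by blast
  have nonzero: "\<theta> p \<noteq> 0" for p
    using assms in_lattice[of p] unfolding is_character_def \<theta>_def by fastforce
  have mult: "\<theta> (n + n', m + m') = \<theta> (n, m) * \<theta> (n', m')" for n m n' m'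
  proof -
    have "lattice_point \<tau> (n + n', m + m') = lattice_point \<tau> (n, m) + lattice_point \<tau> (n', m')"
      by (simp add: lattice_point_def algebra_simps)
    then show ?thesis
      unfolding \<theta>_def by (simp add: hom in_lattice)
  qed
  have "\<theta> (i + j, 0) = \<theta> (i, 0) * \<theta> (j, 0)" "\<theta> (0, i + j) = \<theta> (0, i) * \<theta> (0, j)" for i j
    using mult[of i j 0 0] mult[of 0 0 i j] by simp_all
  then have "\<theta> (n, 0) = \<theta> (1, 0) powi n" "\<theta> (0, m) = \<theta> (0, 1) powi m"
    using additive_to_multiplicative_powi[of "\<lambda>k. \<theta> (k, 0)"]
      additive_to_multiplicative_powi[of "\<lambda>k. \<theta> (0, k)"] nonzero by blast+
  moreover have "\<theta> (n, m) = \<theta> (n, 0) * \<theta> (0, m)"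
    using mult[of n 0 0 m] by simp
  ultimately show ?thesis
    by (simp add: \<theta>_def lattice_point_def)
qed

lemma character_zero:
  assumes "is_character \<tau> \<psi>"
  shows "\<psi> 0 = 1"
  using character_lattice_point[OF assms, of 0 0] by (simp add: lattice_point_def)

lemma disc_points_rows_convex:
  assumes "(n, i) \<in> disc_points \<tau> R" "(n, l) \<in> disc_points \<tau> R" "i \<le> j" "j \<le> l"
  shows "(n, j) \<in> disc_points \<tau> R"
  using assms int_points_on_segment[OF convex_cball, of "of_int n * \<tau>" i 1 0 R l j]
  by (simp add: disc_points_def lattice_point_def scaleR_conv_of_real add.commute)

lemma disc_points_columns_convex:
  assumes "(i, m) \<in> disc_points \<tau> R" "(l, m) \<in> disc_points \<tau> R" "i \<le> j" "j \<le> l"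
  shows "(j, m) \<in> disc_points \<tau> R"
  using assms int_points_on_segment[OF convex_cball, of "of_int m" i \<tau> 0 R l j]
  by (simp add: disc_points_def lattice_point_def scaleR_conv_of_real)

lemma norm_sum_disc_points_along_rows_le:
  fixes \<alpha> \<beta> :: complex
  assumes b: "0 < Im \<tau>" and R: "0 \<le> R" and \<alpha>: "norm \<alpha> = 1" "\<alpha> \<noteq> 1" and \<beta>: "norm \<beta> = 1"
  shows "norm (\<Sum>(n, m)\<in>disc_points \<tau> R. \<beta> powi n * \<alpha> powi m)
    \<le> (2 * (R / Im \<tau>) + 1) * (2 / norm (1 - \<alpha>))"
proof -
  have "norm (\<Sum>(n, m)\<in>disc_points \<tau> R. \<beta> powi n * \<alpha> powi m)
      \<le> card (fst ` disc_points \<tau> R) * (2 / norm (1 - \<alpha>))"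
    by (rule norm_sum_geometric_rows_le[OF finite_disc_points[OF b] \<alpha> _ disc_points_rows_convex])
      (simp add: \<beta> norm_power_int)
  also have "\<dots> \<le> (2 * (R / Im \<tau>) + 1) * (2 / norm (1 - \<alpha>))"
  proof (intro mult_right_mono card_le_ints_in_interval[of _ _ 0])
    show "fst ` disc_points \<tau> R \<subseteq> {n. \<bar>of_int n - 0\<bar> \<le> R / Im \<tau>}"
      using disc_points_coordinate_bounds(1)[OF _ b] by auto
  qed (use R b in auto)
  finally show ?thesis .
qed

lemma norm_sum_disc_points_along_columns_le:
  fixes \<beta> :: complex
  assumes b: "0 < Im \<tau>" and R: "0 \<le> R" and \<beta>: "norm \<beta> = 1" "\<beta> \<noteq> 1"
  shows "norm (\<Sum>p\<in>disc_points \<tau> R. \<beta> powi fst p)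
    \<le> (2 * (R + R * \<bar>Re \<tau>\<bar> / Im \<tau>) + 1) * (2 / norm (1 - \<beta>))"
proof -
  define S where "S = prod.swap ` disc_points \<tau> R"
  have "(\<Sum>p\<in>disc_points \<tau> R. \<beta> powi fst p) = (\<Sum>(k, j)\<in>S. 1 * \<beta> powi j)"
    unfolding S_def by (subst sum.reindex) (auto simp: case_prod_beta)
  also have "norm \<dots> \<le> card (fst ` S) * (2 / norm (1 - \<beta>))"
  proof (rule norm_sum_geometric_rows_le[OF _ \<beta>])
    show "finite S"
      unfolding S_def using finite_disc_points[OF b] by simp
    show "(k, j) \<in> S" if "(k, i) \<in> S" "(k, l) \<in> S" "i \<le> j" "j \<le> l" for k i j l
      using that disc_points_columns_convex[of i k \<tau> R l j] unfolding S_def by force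
  qed simp
  also have "\<dots> \<le> (2 * (R + R * \<bar>Re \<tau>\<bar> / Im \<tau>) + 1) * (2 / norm (1 - \<beta>))"
  proof (intro mult_right_mono card_le_ints_in_interval[of _ _ 0])
    show "fst ` S \<subseteq> {m. \<bar>of_int m - 0\<bar> \<le> R + R * \<bar>Re \<tau>\<bar> / Im \<tau>}"
      unfolding S_def using disc_points_coordinate_bounds(2)[OF _ b] by auto
  qed (use R b in auto)
  finally show ?thesis .
qed

lemma norm_sum_character_disc_points_le:
  assumes b: "0 < Im \<tau>" and \<psi>: "is_character \<tau> \<psi>" and nontrivial: "\<not> (\<forall>\<mu>\<in>lattice \<tau>. \<psi> \<mu> = 1)"
  obtains K where "\<And>R. 1 \<le> R \<Longrightarrow> norm (\<Sum>p\<in>disc_points \<tau> R. \<psi> (lattice_point \<tau> p)) \<le> K * R"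
proof -
  define \<alpha> \<beta> where "\<alpha> = \<psi> 1" and "\<beta> = \<psi> \<tau>"
  have "lattice_point \<tau> (0, 1) = 1" "lattice_point \<tau> (1, 0) = \<tau>"
    by (simp_all add: lattice_point_def)
  then have "1 \<in> lattice \<tau>" "\<tau> \<in> lattice \<tau>"
    unfolding lattice_eq_range_lattice_point by (metis rangeI)+
  then have norms: "norm \<alpha> = 1" "norm \<beta> = 1"
    using \<psi> by (simp_all add: is_character_def \<alpha>_def \<beta>_def)
  have \<psi>_eq: "\<psi> (lattice_point \<tau> p) = \<beta> powi fst p * \<alpha> powi snd p" for p
    using character_lattice_point[OF \<psi>, of "fst p" "snd p"] by (simp add: \<alpha>_def \<beta>_def)
  then have sum_eq: "(\<Sum>p\<in>disc_points \<tau> R. \<psi> (lattice_point \<tau> p))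
      = (\<Sum>(n, m)\<in>disc_points \<tau> R. \<beta> powi n * \<alpha> powi m)" for R
    by (simp add: case_prod_beta)
  have linear: "(A * R + 1) * c \<le> ((A + 1) * c) * R" if "1 \<le> R" "0 \<le> A" "0 \<le> c" for A c R :: real
    using that mult_right_mono[of 1 R c] by (simp add: algebra_simps)
  show ?thesis
  proof (cases "\<alpha> = 1")
    case False
    show ?thesis
    proof (rule that)
      fix R :: real assume "1 \<le> R"
      then show "norm (\<Sum>p\<in>disc_points \<tau> R. \<psi> (lattice_point \<tau> p))
          \<le> ((2 / Im \<tau> + 1) * (2 / norm (1 - \<alpha>))) * R"
        using norm_sum_disc_points_along_rows_le[OF b _ norms(1) False norms(2), of R]
          linear[of R "2 / Im \<tau>" "2 / norm (1 - \<alpha>)"] b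
        by (simp add: sum_eq)
    qed
  next
    case True
    then have "\<beta> \<noteq> 1"
      using nontrivial by (auto simp: lattice_eq_range_lattice_point \<psi>_eq)
    show ?thesis
    proof (rule that)
      fix R :: real assume "1 \<le> R"
      then show "norm (\<Sum>p\<in>disc_points \<tau> R. \<psi> (lattice_point \<tau> p))
          \<le> ((2 + 2 * \<bar>Re \<tau>\<bar> / Im \<tau> + 1) * (2 / norm (1 - \<beta>))) * R"
        using norm_sum_disc_points_along_columns_le[OF b _ norms(2) \<open>\<beta> \<noteq> 1\<close>, of R]
          linear[of R "2 + 2 * \<bar>Re \<tau>\<bar> / Im \<tau>" "2 / norm (1 - \<beta>)"] b
        by (simp add: \<psi>_eq True algebra_simps)
    qed
  qed
qed

section \<open>Asymptotics of Z\<close>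

lemma lattice_norm_le_eq_image:
  "{\<mu>\<in>lattice \<tau>. (cmod \<mu>)\<^sup>2 \<le> t} = lattice_point \<tau> ` disc_points \<tau> (sqrt t)"
proof -
  have "(cmod \<mu>)\<^sup>2 \<le> t \<longleftrightarrow> cmod \<mu> \<le> sqrt t" for \<mu>
    using real_sqrt_le_iff[of "(cmod \<mu>)\<^sup>2" t] by simp
  then show ?thesis
    unfolding lattice_eq_range_lattice_point disc_points_def by auto
qed

lemma finite_lattice_norm_le:
  assumes "0 < Im \<tau>"
  shows "finite {\<mu>\<in>lattice \<tau> - {0}. (cmod \<mu>)\<^sup>2 \<le> t}"
proof (rule finite_subset)
  show "{\<mu>\<in>lattice \<tau> - {0}. (cmod \<mu>)\<^sup>2 \<le> t} \<subseteq> lattice_point \<tau> ` disc_points \<tau> (sqrt t)"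
    unfolding lattice_norm_le_eq_image[symmetric] by auto
qed (use finite_disc_points[OF assms] in simp)

lemma sum_upto_lattice:
  fixes f :: "complex \<Rightarrow> 'a::ab_group_add"
  assumes "0 < Im \<tau>" "0 \<le> t"
  shows "sum_upto (\<lambda>\<mu>. (cmod \<mu>)\<^sup>2) (lattice \<tau> - {0}) f t
    = (\<Sum>p\<in>disc_points \<tau> (sqrt t). f (lattice_point \<tau> p)) - f 0"
proof -
  have "lattice_point \<tau> (0, 0) = 0"
    by (simp add: lattice_point_def)
  then have "0 \<in> lattice_point \<tau> ` disc_points \<tau> (sqrt t)"
    using assms(2) by (force simp: disc_points_def)
  moreover have "{\<mu>\<in>lattice \<tau> - {0}. (cmod \<mu>)\<^sup>2 \<le> t}
      = lattice_point \<tau> ` disc_points \<tau> (sqrt t) - {0}"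
    by (auto simp flip: lattice_norm_le_eq_image)
  moreover have "inj (lattice_point \<tau>)"
    using assms(1) by (simp add: inj_lattice_point)
  then have "inj_on (lattice_point \<tau>) (disc_points \<tau> (sqrt t))"
    by (rule inj_on_subset) simp
  ultimately show ?thesis
    unfolding sum_upto_def using finite_disc_points[OF assms(1)]
    by (simp add: sum_diff1 sum.reindex)
qed

lemma Zsum_eq_sum_upto:
  "Zsum x \<tau> \<psi> = sum_upto (\<lambda>\<mu>. (cmod \<mu>)\<^sup>2) (lattice \<tau> - {0}) (\<lambda>\<mu>. \<psi> \<mu> / of_real ((cmod \<mu>)\<^sup>2)) x"
  unfolding Zsum_def sum_upto_def by (rule sum.cong) auto

lemma Zsum_trivial_character_asymptotics:
  assumes b: "0 < Im \<tau>" and \<psi>: "is_character \<tau> \<psi>" and trivial: "\<forall>\<mu>\<in>lattice \<tau>. \<psi> \<mu> = 1"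
  shows "\<exists>\<eta>::real. (\<lambda>x. Zsum x \<tau> \<psi> - of_real (pi / covolume \<tau> * (ln x + \<eta>)))
    \<in> O[at_top](\<lambda>x. of_real (x powr (-1/2)))"
proof -
  define r where "r = (\<lambda>\<mu>::complex. (cmod \<mu>)\<^sup>2)"
  define U where "U = lattice \<tau> - {0}"
  define \<delta> where "\<delta> = complex_of_real (pi / Im \<tau>)"
  define W where "W x = Zsum x \<tau> \<psi> - \<delta> * of_real (ln x)" for x
  have "norm (sum_upto r U \<psi> t - \<delta> * of_real t) \<le> (4 + 2 / Im \<tau>) * sqrt t" if t: "1 \<le> t" for t
  proof -
    have "sum_upto r U \<psi> t - \<delta> * of_real t
        = of_real (real (card (disc_points \<tau> (sqrt t))) - 1 - pi * (sqrt t)\<^sup>2 / Im \<tau>)"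
      using sum_upto_lattice[OF b, of t \<psi>] trivial t character_zero[OF \<psi>]
      by (simp add: r_def U_def \<delta>_def lattice_eq_range_lattice_point)
    then show ?thesis
      using card_disc_points_sqrt[OF b t] by (simp only: norm_of_real)
  qed
  then obtain L where L: "(W \<longlongrightarrow> L) at_top"
    and O: "(\<lambda>x. W x - L) \<in> O[at_top](\<lambda>x. of_real (x powr (-1/2)))"
    using sum_upto_asymptotics[of U r \<psi> \<delta>] finite_lattice_norm_le[OF b]
    unfolding W_def Zsum_eq_sum_upto r_def U_def by blast
  have "Im (W x) = 0" for x
    unfolding W_def Zsum_eq_sum_upto sum_upto_def using trivial
    by (auto simp: \<delta>_def intro!: sum.neutral)
  moreover have "((\<lambda>x. Im (W x)) \<longlongrightarrow> Im L) at_top"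
    using L by (rule tendsto_Im)
  ultimately have "Im L = 0"
    by (simp add: tendsto_const_iff)
  then have L_real: "L = of_real (Re L)"
    by (simp add: complex_eq_iff)
  define \<eta> where "\<eta> = Re L * Im \<tau> / pi"
  have "pi / covolume \<tau> * (ln x + \<eta>) = pi / Im \<tau> * ln x + Re L" for x
    using b by (simp add: covolume_def \<eta>_def field_simps)
  then have "(\<lambda>x. Zsum x \<tau> \<psi> - of_real (pi / covolume \<tau> * (ln x + \<eta>))) = (\<lambda>x. W x - L)"
    by (subst L_real) (simp add: W_def \<delta>_def diff_diff_eq)
  with O show ?thesis
    by (intro exI[of _ \<eta>]) simp
qed

lemma Zsum_nontrivial_character_asymptotics:
  assumes b: "0 < Im \<tau>" and \<psi>: "is_character \<tau> \<psi>" and nontrivial: "\<not> (\<forall>\<mu>\<in>lattice \<tau>. \<psi> \<mu> = 1)"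
  shows "\<exists>L. ((\<lambda>x. Zsum x \<tau> \<psi>) \<longlongrightarrow> L) at_top \<and>
    (\<lambda>x. Zsum x \<tau> \<psi> - L) \<in> O[at_top](\<lambda>x. of_real (x powr (-1/2)))"
proof -
  define r where "r = (\<lambda>\<mu>::complex. (cmod \<mu>)\<^sup>2)"
  define U where "U = lattice \<tau> - {0}"
  obtain K where K: "\<And>R. 1 \<le> R \<Longrightarrow> norm (\<Sum>p\<in>disc_points \<tau> R. \<psi> (lattice_point \<tau> p)) \<le> K * R"
    using norm_sum_character_disc_points_le[OF assms] by blast
  have "norm (sum_upto r U \<psi> t - 0 * of_real t) \<le> (K + 1) * sqrt t" if t: "1 \<le> t" for t
  proof -
    have "norm (sum_upto r U \<psi> t) = norm ((\<Sum>p\<in>disc_points \<tau> (sqrt t). \<psi> (lattice_point \<tau> p)) - 1)"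
      using sum_upto_lattice[OF b, of t \<psi>] t character_zero[OF \<psi>] by (simp add: r_def U_def)
    also have "\<dots> \<le> K * sqrt t + 1"
      using norm_triangle_ineq4[of _ 1] K[of "sqrt t"] t by (smt (verit) norm_one real_sqrt_ge_one)
    also have "\<dots> \<le> (K + 1) * sqrt t"
      using t by (simp add: algebra_simps)
    finally show ?thesis
      by simp
  qed
  then obtain L where "((\<lambda>x. Zsum x \<tau> \<psi> - 0 * of_real (ln x)) \<longlongrightarrow> L) at_top"
    and "(\<lambda>x. Zsum x \<tau> \<psi> - 0 * of_real (ln x) - L) \<in> O[at_top](\<lambda>x. of_real (x powr (-1/2)))"
    using sum_upto_asymptotics[of U r \<psi> 0] finite_lattice_norm_le[OF b]
    unfolding Zsum_eq_sum_upto r_def U_def by blast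
  then show ?thesis
    by auto
qed

theorem mainTheorem10:
  fixes \<tau> :: complex and \<psi> :: "complex \<Rightarrow> complex"
  assumes "Im \<tau> > 0"
    and "is_character \<tau> \<psi>"
  shows "((\<forall>\<mu>\<in>lattice \<tau>. \<psi> \<mu> = 1) \<longrightarrow>
           (\<exists>\<eta>::real. (\<lambda>x. Zsum x \<tau> \<psi> - of_real (pi / covolume \<tau> * (ln x + \<eta>)))
                \<in> O[at_top](\<lambda>x. of_real (x powr (-1/2)))))
       \<and> (\<not> (\<forall>\<mu>\<in>lattice \<tau>. \<psi> \<mu> = 1) \<longrightarrow>
           (\<exists>L::complex. ((\<lambda>x. Zsum x \<tau> \<psi>) \<longlongrightarrow> L) at_top \<and>
                (\<lambda>x. Zsum x \<tau> \<psi> - L) \<in> O[at_top](\<lambda>x. of_real (x powr (-1/2)))))"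
  using Zsum_trivial_character_asymptotics[OF assms] Zsum_nontrivial_character_asymptotics[OF assms]
  by blast

end
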